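(* Let $P$ be a group property preserved under quotients, let $k\ge2$ be an integer and $\rho:\mathbb{N}\to[0,1]$. Then for every $l$ divisible by $3$, $$\mathbb{P}(\Gamma\in\mathcal{B}(k,l,\rho)\text{ has }P)\ge\mathbb{P}(\Gamma'\in\mathcal{B}'(k,l,\rho)\text{ has }P).$$ In particular, if a random group in $\mathcal{B}'(k,l,\rho)$ has $P$ asymptotically almost surely (as $l\to\infty$ through multiples of $3$), then so does a random group in $\mathcal{B}(k,l,\rho)$.
   Context: Gromov binomial model $\mathcal{B}(k,l,\rho)$: $\Gamma=\langle\mathcal{A}\mid\mathcal{R}\rangle$ with $|\mathcal{A}|=k$, where each cyclically reduced word of length $l$ in $\mathcal{A}\cup\mathcal{A}^{-1}$ is put in $\mathcal{R}$ independently with probability $\rho(l)$. For $l$ divisible by $3$, $W'_{l/3}$ is the set of reduced words of length $l/3$ in $\mathcal{A}\cup\mathcal{A}^{-1}$ whose first and last letters lie in $\mathcal{A}$, and $W'_l$ is the set of words of length $l$ that are concatenations of three words of $W'_{l/3}$. Model $\mathcal{B}'(k,l,\rho)$: $\Gamma'=\langle\mathcal{A}\mid\mathcal{R}\rangle$ with $|\mathcal{A}|=k$, where each word of $W'_l$ is put in $\mathcal{R}$ independently with probability $\rho(l)$. A property is preserved under quotients if whenever a group has it, so does every quotient. *)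

theory Defs
  imports "HOL-Algebra.Group" Complex_Main
begin

text \<open>Letters over the alphabet A = {0..<k}: (False, a) is the generator a,
  (True, a) is its inverse.\<close>
type_synonym letter = "bool \<times> nat"

definition inv_letter :: "letter \<Rightarrow> letter" where
  "inv_letter x = (\<not> fst x, snd x)"

definition alph :: "nat \<Rightarrow> letter set" where
  "alph k = {x. snd x < k}"

definition reduced :: "letter list \<Rightarrow> bool" where
  "reduced w = (\<forall>i. Suc i < length w \<longrightarrow> w ! Suc i \<noteq> inv_letter (w ! i))"

definition cyc_reduced :: "letter list \<Rightarrow> bool" where
  "cyc_reduced w = (reduced w \<and> (w \<noteq> [] \<longrightarrow> last w \<noteq> inv_letter (hd w)))"

definition CR_words :: "nat \<Rightarrow> nat \<Rightarrow> letter list set" where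
  "CR_words k l = {w. set w \<subseteq> alph k \<and> length w = l \<and> cyc_reduced w}"

definition W'_short :: "nat \<Rightarrow> nat \<Rightarrow> letter list set" where
  "W'_short k m = {w. set w \<subseteq> alph k \<and> length w = m \<and> reduced w \<and>
                      (w \<noteq> [] \<longrightarrow> \<not> fst (hd w) \<and> \<not> fst (last w))}"

definition W'_long :: "nat \<Rightarrow> nat \<Rightarrow> letter list set" where
  "W'_long k l = {u @ v @ x | u v x. u \<in> W'_short k (l div 3) \<and> v \<in> W'_short k (l div 3)
                                    \<and> x \<in> W'_short k (l div 3)}"

inductive pres_step :: "nat \<Rightarrow> letter list set \<Rightarrow> letter list \<Rightarrow> letter list \<Rightarrow> bool"
  for k R where
  free: "\<lbrakk>set u \<subseteq> alph k; set v \<subseteq> alph k; x \<in> alph k\<rbrakk>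
         \<Longrightarrow> pres_step k R (u @ v) (u @ [x, inv_letter x] @ v)"
| rel: "\<lbrakk>set u \<subseteq> alph k; set v \<subseteq> alph k; r \<in> R\<rbrakk>
         \<Longrightarrow> pres_step k R (u @ v) (u @ r @ v)"

definition pres_rel :: "nat \<Rightarrow> letter list set \<Rightarrow> (letter list \<times> letter list) set" where
  "pres_rel k R = {(u, v). set u \<subseteq> alph k \<and> set v \<subseteq> alph k \<and> equivclp (pres_step k R) u v}"

definition pres_group :: "nat \<Rightarrow> letter list set \<Rightarrow> letter list set monoid" where
  "pres_group k R =
     \<lparr> carrier = lists (alph k) // pres_rel k R,
       monoid.mult = (\<lambda>A B. \<Union>a\<in>A. \<Union>b\<in>B. pres_rel k R `` {a @ b}),
       one = pres_rel k R `` {[]} \<rparr>"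

text \<open>Probability that a binomial random subset of S (each element independently
  with probability p) satisfies Q.\<close>
definition binom_prob :: "'a set \<Rightarrow> real \<Rightarrow> ('a set \<Rightarrow> bool) \<Rightarrow> real" where
  "binom_prob S p Q = (\<Sum>R \<in> {R. R \<subseteq> S \<and> Q R}. p ^ card R * (1 - p) ^ (card S - card R))"

definition prob_B :: "nat \<Rightarrow> nat \<Rightarrow> (nat \<Rightarrow> real) \<Rightarrow> (letter list set monoid \<Rightarrow> bool) \<Rightarrow> real" where
  "prob_B k l \<rho> P = binom_prob (CR_words k l) (\<rho> l) (\<lambda>R. P (pres_group k R))"

definition prob_B' :: "nat \<Rightarrow> nat \<Rightarrow> (nat \<Rightarrow> real) \<Rightarrow> (letter list set monoid \<Rightarrow> bool) \<Rightarrow> real" where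
  "prob_B' k l \<rho> P = binom_prob (W'_long k l) (\<rho> l) (\<lambda>R. P (pres_group k R))"

definition preserved_under_quotients :: "(letter list set monoid \<Rightarrow> bool) \<Rightarrow> bool" where
  "preserved_under_quotients P =
    (\<forall>G H. group G \<and> group H \<and> P G \<and> (\<exists>h \<in> hom G H. h ` carrier G = carrier H) \<longrightarrow> P H)"

end

theory Submission
  imports Defs
begin

text \<open>Every word of \<open>W'_l\<close> is cyclically reduced: its three blocks are reduced and begin
  and end with generators, so nothing cancels at the junctions or cyclically. Intersecting
  a binomial random subset of the cyclically reduced words with \<open>W'_l\<close> yields a binomial
  random subset of \<open>W'_l\<close>, and \<open>\<langle>A | R \<inter> W'_l\<rangle>\<close> surjects onto \<open>\<langle>A | R\<rangle>\<close>. So whenever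
  the group of the smaller relator set has \<open>P\<close>, so does that of the larger one, which gives
  the inequality; the limit statement follows by squeezing.\<close>

lemma equivclp_map:
  assumes "\<And>x y. r x y \<Longrightarrow> s (f x) (f y)" and "equivclp r x y"
  shows "equivclp s (f x) (f y)"
  using assms(2)
proof (induction rule: equivclp_induct)
  case base
  show ?case by simp
next
  case (step y z)
  then show ?case using assms(1) by (meson equivclp_into_equivclp)
qed

lemma inv_letter_inv_letter [simp]: "inv_letter (inv_letter x) = x"
  by (simp add: inv_letter_def)

lemma inv_letter_in_alph [simp]: "inv_letter x \<in> alph k \<longleftrightarrow> x \<in> alph k"
  by (simp add: inv_letter_def alph_def)

lemma pres_step_append:
  assumes "pres_step k R u v" and "set w1 \<subseteq> alph k" and "set w2 \<subseteq> alph k"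
  shows "pres_step k R (w1 @ u @ w2) (w1 @ v @ w2)"
  using assms
proof (induction rule: pres_step.induct)
  case (free u v x)
  then show ?case using pres_step.free[of "w1 @ u" k "v @ w2" x R] by simp
next
  case (rel u v r)
  then show ?case using pres_step.rel[of "w1 @ u" k "v @ w2" r R] by simp
qed

lemma pres_step_mono: "pres_step k R1 u v \<Longrightarrow> R1 \<subseteq> R2 \<Longrightarrow> pres_step k R2 u v"
  by (induction rule: pres_step.induct) (blast intro: pres_step.intros)+

lemma equiv_pres_rel: "equiv (lists (alph k)) (pres_rel k R)"
  unfolding equiv_def refl_on_def sym_def trans_def pres_rel_def
  by (auto intro: equivclp_sym equivclp_trans)

lemma pres_rel_refl: "set w \<subseteq> alph k \<Longrightarrow> (w, w) \<in> pres_rel k R"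
  by (simp add: pres_rel_def)

lemma pres_rel_append:
  assumes "(a, a') \<in> pres_rel k R" and "(b, b') \<in> pres_rel k R"
  shows "(a @ b, a' @ b') \<in> pres_rel k R"
proof -
  have "equivclp (pres_step k R) (a @ b) (a' @ b)"
    using assms equivclp_map[of "pres_step k R" "pres_step k R" "\<lambda>u. u @ b"]
      pres_step_append[of k R _ _ "[]" b] unfolding pres_rel_def by auto
  also have "equivclp (pres_step k R) (a' @ b) (a' @ b')"
    using assms equivclp_map[of "pres_step k R" "pres_step k R" "\<lambda>u. a' @ u"]
      pres_step_append[of k R _ _ a' "[]"] unfolding pres_rel_def by auto
  finally show ?thesis using assms unfolding pres_rel_def by auto
qed

lemma pres_rel_mono: "R1 \<subseteq> R2 \<Longrightarrow> pres_rel k R1 \<subseteq> pres_rel k R2"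
  unfolding pres_rel_def
  using equivclp_map[of "pres_step k R1" "pres_step k R2" id] pres_step_mono by auto

lemma pres_rel_inverse_append:
  assumes "set w \<subseteq> alph k"
  shows "(rev (map inv_letter w) @ w, []) \<in> pres_rel k R"
  using assms
proof (induction w rule: rev_induct)
  case Nil
  show ?case by (simp add: pres_rel_refl)
next
  case (snoc x w)
  let ?y = "inv_letter x"
  have x: "x \<in> alph k" and w: "set w \<subseteq> alph k" using snoc.prems by auto
  have "([?y] @ (rev (map inv_letter w) @ w) @ [x], [?y] @ [] @ [x]) \<in> pres_rel k R"
    using x w snoc.IH by (intro pres_rel_append pres_rel_refl) auto
  moreover have "pres_step k R ([] @ []) ([] @ [?y, x] @ [])"
    using pres_step.free[of "[]" k "[]" ?y R] x by simp
  then have "([?y, x], []) \<in> pres_rel k R"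
    using x unfolding pres_rel_def by (auto intro: equivclp_sym)
  ultimately show ?case
    using equiv_pres_rel[of k R] unfolding equiv_def trans_def by auto
qed

lemma pres_group_mult_classes:
  assumes "set a \<subseteq> alph k" and "set b \<subseteq> alph k"
  shows "pres_rel k R `` {a} \<otimes>\<^bsub>pres_group k R\<^esub> pres_rel k R `` {b} = pres_rel k R `` {a @ b}"
proof -
  let ?E = "pres_rel k R"
  have "?E `` {a' @ b'} = ?E `` {a @ b}" if "a' \<in> ?E `` {a}" and "b' \<in> ?E `` {b}" for a' b'
  proof -
    have "(a @ b, a' @ b') \<in> ?E" using that by (auto intro: pres_rel_append)
    then show ?thesis by (rule equiv_class_eq[OF equiv_pres_rel, symmetric])
  qed
  then show ?thesis unfolding pres_group_def using assms by (auto intro: pres_rel_refl)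
qed

lemma pres_group_carrier:
  "carrier (pres_group k R) = (\<lambda>a. pres_rel k R `` {a}) ` {a. set a \<subseteq> alph k}"
  by (auto simp: pres_group_def quotient_def)

lemma pres_group_one: "\<one>\<^bsub>pres_group k R\<^esub> = pres_rel k R `` {[]}"
  by (simp add: pres_group_def)

lemma pres_group_carrier_cases:
  assumes "x \<in> carrier (pres_group k R)"
  obtains a where "set a \<subseteq> alph k" and "x = pres_rel k R `` {a}"
  using assms by (auto simp: pres_group_carrier)

lemma pres_group_class_in_carrier:
  "set a \<subseteq> alph k \<Longrightarrow> pres_rel k R `` {a} \<in> carrier (pres_group k R)"
  by (simp add: pres_group_carrier)

lemma group_pres_group: "group (pres_group k R)"
proof (rule groupI)
  fix x y
  assume "x \<in> carrier (pres_group k R)" and "y \<in> carrier (pres_group k R)"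
  then show "x \<otimes>\<^bsub>pres_group k R\<^esub> y \<in> carrier (pres_group k R)"
    by (auto elim!: pres_group_carrier_cases simp: pres_group_mult_classes pres_group_class_in_carrier)
next
  show "\<one>\<^bsub>pres_group k R\<^esub> \<in> carrier (pres_group k R)"
    by (simp add: pres_group_one pres_group_class_in_carrier)
next
  fix x y z
  assume "x \<in> carrier (pres_group k R)" and "y \<in> carrier (pres_group k R)"
    and "z \<in> carrier (pres_group k R)"
  then show "x \<otimes>\<^bsub>pres_group k R\<^esub> y \<otimes>\<^bsub>pres_group k R\<^esub> z =
      x \<otimes>\<^bsub>pres_group k R\<^esub> (y \<otimes>\<^bsub>pres_group k R\<^esub> z)"
    by (auto elim!: pres_group_carrier_cases simp: pres_group_mult_classes)
next
  fix x
  assume "x \<in> carrier (pres_group k R)"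
  then show "\<one>\<^bsub>pres_group k R\<^esub> \<otimes>\<^bsub>pres_group k R\<^esub> x = x"
    by (auto elim!: pres_group_carrier_cases simp: pres_group_one pres_group_mult_classes)
next
  fix x
  assume "x \<in> carrier (pres_group k R)"
  then obtain a where a: "set a \<subseteq> alph k" and x: "x = pres_rel k R `` {a}"
    by (rule pres_group_carrier_cases)
  let ?a' = "rev (map inv_letter a)"
  have a': "set ?a' \<subseteq> alph k" using a by auto
  have "pres_rel k R `` {?a'} \<otimes>\<^bsub>pres_group k R\<^esub> x = pres_rel k R `` {?a' @ a}"
    unfolding x by (rule pres_group_mult_classes[OF a' a])
  also have "\<dots> = pres_rel k R `` {[]}"
    by (rule equiv_class_eq[OF equiv_pres_rel pres_rel_inverse_append[OF a]])
  finally show "\<exists>y\<in>carrier (pres_group k R). y \<otimes>\<^bsub>pres_group k R\<^esub> x = \<one>\<^bsub>pres_group k R\<^esub>"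
    using pres_group_class_in_carrier[OF a'] by (auto simp: pres_group_one)
qed

lemma pres_group_epimorphism:
  fixes k :: nat
  assumes "R1 \<subseteq> R2"
  defines "h \<equiv> \<lambda>X. pres_rel k R2 `` X"
  shows "h \<in> hom (pres_group k R1) (pres_group k R2)"
    and "h ` carrier (pres_group k R1) = carrier (pres_group k R2)"
proof -
  have h_class: "h (pres_rel k R1 `` {a}) = pres_rel k R2 `` {a}" if "set a \<subseteq> alph k" for a
    using pres_rel_mono[OF assms(1)] pres_rel_refl[OF that] equiv_pres_rel[of k R2]
    unfolding h_def equiv_def trans_def by blast
  show "h \<in> hom (pres_group k R1) (pres_group k R2)"
    by (rule homI) (auto elim!: pres_group_carrier_cases
        simp: h_class pres_group_mult_classes pres_group_class_in_carrier)
  show "h ` carrier (pres_group k R1) = carrier (pres_group k R2)"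
    unfolding pres_group_carrier image_image by (auto simp: h_class)
qed

lemma binom_prob_Pow:
  assumes "finite S"
  shows "binom_prob S p Q =
    (\<Sum>R\<in>Pow S. if Q R then p ^ card R * (1 - p) ^ (card S - card R) else 0)"
proof -
  have "{R. R \<subseteq> S \<and> Q R} = {R \<in> Pow S. Q R}" by auto
  then show ?thesis unfolding binom_prob_def using assms by (simp add: sum.inter_filter[symmetric])
qed

lemma binom_prob_True:
  assumes "finite S"
  shows "binom_prob S p (\<lambda>_. True) = 1"
proof -
  have "binom_prob S p (\<lambda>_. True) = (\<Sum>R\<in>Pow S. (\<Prod>x\<in>R. p) * (\<Prod>x\<in>S - R. 1 - p))"
    unfolding binom_prob_Pow[OF assms]
    by (rule sum.cong) (auto simp: card_Diff_subset finite_subset[OF _ assms])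
  also have "\<dots> = (\<Prod>x\<in>S. p + (1 - p))"
    by (rule prod_add[OF assms, symmetric])
  finally show ?thesis by simp
qed

lemma binom_prob_mono:
  assumes "finite S" and "0 \<le> p" and "p \<le> 1" and "\<And>R. R \<subseteq> S \<Longrightarrow> Q1 R \<Longrightarrow> Q2 R"
  shows "binom_prob S p Q1 \<le> binom_prob S p Q2"
  unfolding binom_prob_Pow[OF assms(1)] by (rule sum_mono) (use assms in auto)

lemma binom_prob_le_1:
  assumes "finite S" and "0 \<le> p" and "p \<le> 1"
  shows "binom_prob S p Q \<le> 1"
  using binom_prob_mono[OF assms, of Q "\<lambda>_. True"] binom_prob_True[OF assms(1)] by simp

lemma binom_prob_inter:
  assumes "finite S" and "S' \<subseteq> S"
  shows "binom_prob S p (\<lambda>R. Q (R \<inter> S')) = binom_prob S' p Q"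
proof -
  define D where "D = S - S'"
  have fS': "finite S'" and fD: "finite D" using assms finite_subset unfolding D_def by auto
  have cS: "card S = card S' + card D"
    using card_Diff_subset[OF fS' assms(2)] card_mono[OF assms] unfolding D_def by simp
  define g where "g R = (if Q (R \<inter> S') then p ^ card R * (1 - p) ^ (card S - card R) else 0)" for R
  define w1 where "w1 A = (if Q A then p ^ card A * (1 - p) ^ (card S' - card A) else 0)" for A
  define w2 where "w2 B = p ^ card B * (1 - p) ^ (card D - card B)" for B :: "'a set"
  have bij: "bij_betw (\<lambda>(A, B). A \<union> B) (Pow S' \<times> Pow D) (Pow S)"
    by (rule bij_betw_byWitness[where f' = "\<lambda>R. (R \<inter> S', R - S')"])
       (use assms in \<open>auto simp: D_def\<close>)
  have g_split: "g (A \<union> B) = w1 A * w2 B" if "A \<subseteq> S'" and "B \<subseteq> D" for A B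
  proof -
    have fA: "finite A" and fB: "finite B" using that fS' fD finite_subset by auto
    have "card (A \<union> B) = card A + card B"
      using card_Un_disjoint[OF fA fB] that by (auto simp: D_def)
    moreover have "card S - (card A + card B) = (card S' - card A) + (card D - card B)"
      using cS card_mono[OF fS' that(1)] card_mono[OF fD that(2)] by simp
    moreover have "(A \<union> B) \<inter> S' = A" using that by (auto simp: D_def)
    ultimately show ?thesis unfolding g_def w1_def w2_def by (simp add: power_add mult_ac)
  qed
  have "binom_prob S p (\<lambda>R. Q (R \<inter> S')) = (\<Sum>R\<in>Pow S. g R)"
    unfolding binom_prob_Pow[OF assms(1)] g_def ..
  also have "\<dots> = (\<Sum>(A, B)\<in>Pow S' \<times> Pow D. g (A \<union> B))"
    using sum.reindex_bij_betw[OF bij, of g] by (simp add: case_prod_unfold)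
  also have "\<dots> = (\<Sum>A\<in>Pow S'. \<Sum>B\<in>Pow D. g (A \<union> B))"
    by (rule sum.cartesian_product[symmetric])
  also have "\<dots> = (\<Sum>A\<in>Pow S'. w1 A * (\<Sum>B\<in>Pow D. w2 B))"
    by (auto intro!: sum.cong simp: g_split sum_distrib_left)
  also have "\<dots> = (\<Sum>A\<in>Pow S'. w1 A)"
    using binom_prob_True[OF fD, of p] unfolding binom_prob_Pow[OF fD] w2_def by simp
  also have "\<dots> = binom_prob S' p Q"
    unfolding binom_prob_Pow[OF fS'] w1_def ..
  finally show ?thesis .
qed

lemma reduced_Nil [simp]: "reduced []"
  and reduced_singleton [simp]: "reduced [x]"
  by (simp_all add: reduced_def)

lemma reduced_Cons_Cons [simp]:
  "reduced (x # y # w) \<longleftrightarrow> y \<noteq> inv_letter x \<and> reduced (y # w)"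
  by (simp add: reduced_def All_less_Suc2)

lemma reduced_Cons: "reduced (x # w) \<longleftrightarrow> reduced w \<and> (w \<noteq> [] \<longrightarrow> hd w \<noteq> inv_letter x)"
  by (cases w) auto

lemma reduced_append:
  "reduced (u @ v) \<longleftrightarrow>
     reduced u \<and> reduced v \<and> (u \<noteq> [] \<and> v \<noteq> [] \<longrightarrow> hd v \<noteq> inv_letter (last u))"
  by (induction u) (auto simp: reduced_Cons)

lemma finite_CR_words: "finite (CR_words k l)"
proof -
  have "finite (alph k)"
    by (rule finite_subset[of _ "UNIV \<times> {..<k}"]) (auto simp: alph_def)
  from finite_lists_length_eq[OF this, of l] show ?thesis
    by (rule finite_subset[rotated]) (auto simp: CR_words_def)
qed

lemma W'_long_subset_CR_words:
  assumes "3 dvd l"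
  shows "W'_long k l \<subseteq> CR_words k l"
proof
  fix w
  assume "w \<in> W'_long k l"
  then obtain u v x where w: "w = u @ v @ x" and words: "u \<in> W'_short k (l div 3)"
      "v \<in> W'_short k (l div 3)" "x \<in> W'_short k (l div 3)"
    unfolding W'_long_def by blast
  have "length w = l" using words assms unfolding w W'_short_def by auto
  moreover have "reduced w \<and> (w \<noteq> [] \<longrightarrow> last w \<noteq> inv_letter (hd w))"
  proof (cases "l div 3 = 0")
    case True
    then show ?thesis using words unfolding w W'_short_def by auto
  next
    case False
    then have "u \<noteq> []" "v \<noteq> []" "x \<noteq> []" using words by (auto simp: W'_short_def)
    then show ?thesis using words unfolding w W'_short_def
      by (auto simp: reduced_append inv_letter_def)
  qed
  ultimately show "w \<in> CR_words k l"
    using words unfolding w CR_words_def cyc_reduced_def W'_short_def by auto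
qed

lemma preserved_under_quotients_pres_group_mono:
  assumes "preserved_under_quotients P" and "R1 \<subseteq> R2" and "P (pres_group k R1)"
  shows "P (pres_group k R2)"
  using assms pres_group_epimorphism[OF assms(2)] group_pres_group
  unfolding preserved_under_quotients_def by blast

lemma binom_prob_pres_group_mono:
  assumes "preserved_under_quotients P" and "finite S" and "S' \<subseteq> S" and "0 \<le> p" and "p \<le> 1"
  shows "binom_prob S' p (\<lambda>R. P (pres_group k R)) \<le> binom_prob S p (\<lambda>R. P (pres_group k R))"
proof -
  have "binom_prob S' p (\<lambda>R. P (pres_group k R)) =
      binom_prob S p (\<lambda>R. P (pres_group k (R \<inter> S')))"
    by (rule binom_prob_inter[OF assms(2,3), symmetric])
  also have "\<dots> \<le> binom_prob S p (\<lambda>R. P (pres_group k R))"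
    by (rule binom_prob_mono[OF assms(2,4,5)])
      (blast intro: preserved_under_quotients_pres_group_mono[OF assms(1)])
  finally show ?thesis .
qed

theorem proposition4p6:
  fixes P :: "letter list set monoid \<Rightarrow> bool" and k :: nat and \<rho> :: "nat \<Rightarrow> real"
  assumes "preserved_under_quotients P"
    and "k \<ge> 2"
    and "\<And>n. 0 \<le> \<rho> n \<and> \<rho> n \<le> 1"
  shows "(\<forall>l. 3 dvd l \<longrightarrow> prob_B k l \<rho> P \<ge> prob_B' k l \<rho> P)
       \<and> ((\<lambda>n. prob_B' k (3 * n) \<rho> P) \<longlonglongrightarrow> 1 \<longrightarrow> (\<lambda>n. prob_B k (3 * n) \<rho> P) \<longlonglongrightarrow> 1)"
proof -
  have ineq: "prob_B' k l \<rho> P \<le> prob_B k l \<rho> P" if "3 dvd l" for l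
    unfolding prob_B_def prob_B'_def
    using binom_prob_pres_group_mono[OF assms(1) finite_CR_words W'_long_subset_CR_words[OF that]]
      assms(3) by blast
  have le_1: "prob_B k l \<rho> P \<le> 1" for l
    unfolding prob_B_def using binom_prob_le_1[OF finite_CR_words] assms(3) by blast
  have "(\<lambda>n. prob_B k (3 * n) \<rho> P) \<longlonglongrightarrow> 1" if "(\<lambda>n. prob_B' k (3 * n) \<rho> P) \<longlonglongrightarrow> 1"
    by (rule tendsto_sandwich[OF _ _ that tendsto_const]) (auto intro!: always_eventually ineq le_1)
  with ineq show ?thesis by auto
qed

end
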